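(* Let $d\ge1$, $p>1$, $s\in(0,1)$, and $\alpha_1,\alpha_2\in\mathbb{R}$ with $\alpha=\alpha_1+\alpha_2$, $\alpha_1p,\alpha_2p\in(-d,sp)$, $0\le\alpha p<sp$ and $sp-\alpha p<d$. Let $\mathcal{C}_\alpha>0$ be the weighted fractional Sobolev constant described in the context. Then for every $u\in W^{s,p,\alpha}(\mathbb{R}^d)$ with $\int_{\mathbb{R}^d}|u(x)|^pdx=1$, \[ \int_{\mathbb{R}^d}|u(x)|^p\log|u(x)|\,dx\le\frac{d}{(s-\alpha)p^2}\log\left(\mathcal{C}_\alpha\int_{\mathbb{R}^d}\int_{\mathbb{R}^d}\frac{|u(x)-u(y)|^p}{|x-y|^{d+sp}}|x|^{\alpha_1p}|y|^{\alpha_2p}\,dx\,dy\right). \]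
   Context: The weighted Gagliardo seminorm is $[u]_{W^{s,p,\alpha}(\mathbb{R}^d)}^p=\int_{\mathbb{R}^d}\int_{\mathbb{R}^d}\frac{|u(x)-u(y)|^p}{|x-y|^{d+sp}}|x|^{\alpha_1p}|y|^{\alpha_2p}dx\,dy$, and $W^{s,p,\alpha}(\mathbb{R}^d)$ is the closure of $C^1_c(\mathbb{R}^d)$ with respect to the norm $(\|u\|_{L^p(\mathbb{R}^d)}^p+[u]_{W^{s,p,\alpha}(\mathbb{R}^d)}^p)^{1/p}$. $\mathcal{C}_\alpha=\mathcal{C}_\alpha(d,p,s,\alpha_1,\alpha_2)>0$ is a constant such that, with $p^*_{s,\alpha}=\frac{dp}{d-sp+\alpha p}$, the weighted fractional Sobolev inequality $\|u\|_{L^{p^*_{s,\alpha}}(\mathbb{R}^d)}\le\mathcal{C}_\alpha^{1/p}[u]_{W^{s,p,\alpha}(\mathbb{R}^d)}$ holds for all $u\in W^{s,p,\alpha}(\mathbb{R}^d)$ (such a constant exists under the stated hypotheses by a fractional Caffarelli–Kohn–Nirenberg inequality of Nguyen and Squassina). *)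

theory Defs
  imports "HOL-Analysis.Analysis"
begin

text \<open>Functions on R^d are modelled as maps from a Euclidean space 'a with d = DIM('a);
  the measure is Lebesgue (Borel) measure lborel.\<close>

definition C1c :: "('a::euclidean_space \<Rightarrow> real) set" where
  "C1c = {\<phi>. (\<exists>D :: 'a \<Rightarrow> ('a \<Rightarrow>\<^sub>L real).
               (\<forall>x. (\<phi> has_derivative blinfun_apply (D x)) (at x)) \<and> continuous_on UNIV D)
            \<and> compact (closure {x. \<phi> x \<noteq> 0})}"

definition Lp_pow :: "real \<Rightarrow> ('a::euclidean_space \<Rightarrow> real) \<Rightarrow> ennreal" where
  "Lp_pow q u = (\<integral>\<^sup>+ x. ennreal (\<bar>u x\<bar> powr q) \<partial>lborel)"

definition gagliardo_pow ::
  "real \<Rightarrow> real \<Rightarrow> real \<Rightarrow> real \<Rightarrow> ('a::euclidean_space \<Rightarrow> real) \<Rightarrow> ennreal" where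
  "gagliardo_pow s p \<alpha>1 \<alpha>2 u =
     (\<integral>\<^sup>+ x. \<integral>\<^sup>+ y. ennreal (\<bar>u x - u y\<bar> powr p / norm (x - y) powr (real DIM('a) + s * p)
                          * norm x powr (\<alpha>1 * p) * norm y powr (\<alpha>2 * p)) \<partial>lborel \<partial>lborel)"

definition Wspa :: "real \<Rightarrow> real \<Rightarrow> real \<Rightarrow> real \<Rightarrow> ('a::euclidean_space \<Rightarrow> real) set" where
  "Wspa s p \<alpha>1 \<alpha>2 = {u. u \<in> borel_measurable lborel \<and>
       Lp_pow p u < \<infinity> \<and> gagliardo_pow s p \<alpha>1 \<alpha>2 u < \<infinity> \<and>
       (\<exists>\<phi> :: nat \<Rightarrow> 'a \<Rightarrow> real. (\<forall>k. \<phi> k \<in> C1c) \<and>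
          ((\<lambda>k. Lp_pow p (\<lambda>x. \<phi> k x - u x) + gagliardo_pow s p \<alpha>1 \<alpha>2 (\<lambda>x. \<phi> k x - u x))
              \<longlonglongrightarrow> 0))}"

definition entropy_int :: "real \<Rightarrow> ('a::euclidean_space \<Rightarrow> real) \<Rightarrow> ereal" where
  "entropy_int p u =
     enn2ereal (\<integral>\<^sup>+ x. ennreal (max 0 (\<bar>u x\<bar> powr p * ln \<bar>u x\<bar>)) \<partial>lborel)
   - enn2ereal (\<integral>\<^sup>+ x. ennreal (max 0 (- (\<bar>u x\<bar> powr p * ln \<bar>u x\<bar>))) \<partial>lborel)"

end

theory Submission
  imports Defs
begin

text \<open>Multiplying \<open>ln y \<le> y - 1\<close> for \<open>y = |u|^(q-p) / \<integral>|u|^q\<close> by \<open>|u|^p\<close> and integrating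
  against \<open>\<integral>|u|^p = 1\<close> gives \<open>\<integral>|u|^p ln|u| \<le> ln (\<integral>|u|^q) / (q - p)\<close> for every \<open>q > p\<close>,
  i.e. the derivative at \<open>p\<close> of the convex function \<open>q \<mapsto> ln \<integral>|u|^q\<close> is below its difference
  quotients. At the critical exponent \<open>q = p*\<close> the weighted Sobolev inequality bounds
  \<open>\<integral>|u|^q\<close> by \<open>(C [u]^p)^(q/p)\<close>, and \<open>q / (p (q - p)) = d / ((s - \<alpha>) p\<^sup>2)\<close>.\<close>

lemma mult_ln_le_powr:
  fixes t r A p :: real
  assumes "t \<ge> 0" and "A > 0"
  shows "r * (t powr p * ln t) \<le> t powr (p + r) / A + (ln A - 1) * t powr p"
proof (cases "t = 0")
  case False
  with assms have t: "t > 0" by simp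
  have "ln (t powr r / A) \<le> t powr r / A - 1"
    using t assms by (intro ln_le_minus_one) simp
  then have "t powr p * (r * ln t - ln A) \<le> t powr p * (t powr r / A - 1)"
    using t assms by (intro mult_left_mono) (simp_all add: ln_div)
  then show ?thesis
    using t by (simp add: powr_add algebra_simps)
qed simp

lemma nn_integral_pos_minus_neg_le_integral:
  fixes f g :: "'a \<Rightarrow> real"
  assumes g: "integrable M g" and le: "AE x in M. f x \<le> g x"
  shows "enn2ereal (\<integral>\<^sup>+ x. ennreal (max 0 (f x)) \<partial>M)
           - enn2ereal (\<integral>\<^sup>+ x. ennreal (max 0 (- f x)) \<partial>M) \<le> ereal (integral\<^sup>L M g)"
proof -
  obtain a where a: "(\<integral>\<^sup>+ x. ennreal (g x) \<partial>M) = ennreal a" "a \<ge> 0"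
    using g unfolding real_integrable_def
    by (cases "\<integral>\<^sup>+ x. ennreal (g x) \<partial>M" rule: ennreal_cases) auto
  obtain b where b: "(\<integral>\<^sup>+ x. ennreal (- g x) \<partial>M) = ennreal b" "b \<ge> 0"
    using g unfolding real_integrable_def
    by (cases "\<integral>\<^sup>+ x. ennreal (- g x) \<partial>M" rule: ennreal_cases) auto
  have pos: "(\<integral>\<^sup>+ x. ennreal (max 0 (f x)) \<partial>M) \<le> (\<integral>\<^sup>+ x. ennreal (g x) \<partial>M)"
    using le by (intro nn_integral_mono_AE)
        (auto simp: ennreal_max_0 intro: ennreal_leI elim!: eventually_mono)
  have neg: "(\<integral>\<^sup>+ x. ennreal (- g x) \<partial>M) \<le> (\<integral>\<^sup>+ x. ennreal (max 0 (- f x)) \<partial>M)"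
    using le by (intro nn_integral_mono_AE)
        (auto simp: ennreal_max_0 intro: ennreal_leI elim!: eventually_mono)
  have "enn2ereal (\<integral>\<^sup>+ x. ennreal (max 0 (f x)) \<partial>M) - enn2ereal (\<integral>\<^sup>+ x. ennreal (max 0 (- f x)) \<partial>M)
      \<le> enn2ereal (\<integral>\<^sup>+ x. ennreal (g x) \<partial>M) - enn2ereal (\<integral>\<^sup>+ x. ennreal (- g x) \<partial>M)"
    using pos neg by (intro ereal_minus_mono) (simp_all add: less_eq_ennreal.rep_eq)
  also have "\<dots> = ereal (integral\<^sup>L M g)"
    by (simp only: real_lebesgue_integral_def[OF g] a b enn2ereal_ennreal enn2real_ennreal
        ereal_minus(1))
  finally show ?thesis .
qed

lemma Lp_pow_eq_0_iff:
  fixes u :: "'a::euclidean_space \<Rightarrow> real"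
  assumes "u \<in> borel_measurable lborel"
  shows "Lp_pow q u = 0 \<longleftrightarrow> (AE x in lborel. u x = 0)"
  using assms unfolding Lp_pow_def by (subst nn_integral_0_iff_AE) auto

lemma entropy_int_le_ln_Lp_pow:
  fixes u :: "'a::euclidean_space \<Rightarrow> real"
  assumes u[measurable]: "u \<in> borel_measurable lborel"
    and "p < q" and "Lp_pow p u = 1" and "Lp_pow q u = ennreal A" and "A > 0"
  shows "entropy_int p u \<le> ereal (ln A / (q - p))"
proof -
  define g where "g x = (\<bar>u x\<bar> powr q / A + (ln A - 1) * \<bar>u x\<bar> powr p) / (q - p)" for x
  have "has_bochner_integral lborel (\<lambda>x. \<bar>u x\<bar> powr p) 1"
    using assms by (intro has_bochner_integral_nn_integral) (auto simp: Lp_pow_def)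
  moreover have "has_bochner_integral lborel (\<lambda>x. \<bar>u x\<bar> powr q) A"
    using assms by (intro has_bochner_integral_nn_integral) (auto simp: Lp_pow_def)
  ultimately have "has_bochner_integral lborel g ((A / A + (ln A - 1) * 1) / (q - p))"
    unfolding g_def by (intro has_bochner_integral_divide_zero has_bochner_integral_add
        has_bochner_integral_mult_right)
  then have g: "integrable lborel g" "integral\<^sup>L lborel g = ln A / (q - p)"
    using \<open>A > 0\<close> by (simp_all add: has_bochner_integral_iff)
  have "\<bar>u x\<bar> powr p * ln \<bar>u x\<bar> \<le> g x" for x
    using mult_ln_le_powr[of "\<bar>u x\<bar>" A "q - p" p] \<open>p < q\<close> \<open>A > 0\<close>
    by (simp add: g_def pos_le_divide_eq algebra_simps)
  then show ?thesis
    using nn_integral_pos_minus_neg_le_integral[OF g(1)] g(2) by (simp add: entropy_int_def)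
qed

lemma critical_exponent_gap:
  fixes d p \<sigma> q :: real
  assumes "p > 0" and "\<sigma> > 0" and "\<sigma> * p < d" and q: "q = d * p / (d - \<sigma> * p)"
  shows "p < q" and "q / p / (q - p) = d / (\<sigma> * p\<^sup>2)"
proof -
  have D: "d - \<sigma> * p > 0" using assms by simp
  have gap: "q - p = \<sigma> * p\<^sup>2 / (d - \<sigma> * p)"
    using D unfolding q by (simp add: field_simps power2_eq_square)
  moreover have "\<sigma> * p\<^sup>2 / (d - \<sigma> * p) > 0"
    using D assms by simp
  ultimately show "p < q"
    by simp
  show "q / p / (q - p) = d / (\<sigma> * p\<^sup>2)"
    using D assms unfolding gap q by (simp add: field_simps power2_eq_square)
qed

lemma ln_le_of_powr_le:
  fixes a x p q :: real
  assumes "a > 0" and "p > 0" and "q > 0" and "x \<ge> 0"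
    and le: "a powr (1 / q) \<le> x powr (1 / p)"
  shows "ln a \<le> q / p * ln x"
proof -
  have "0 < a powr (1 / q)" using \<open>a > 0\<close> by simp
  with le \<open>x \<ge> 0\<close> have "x > 0" by (cases "x = 0") auto
  with le \<open>a > 0\<close> have "ln a / q \<le> ln x / p"
    by (simp add: ln_powr flip: ln_le_cancel_iff)
  with \<open>p > 0\<close> \<open>q > 0\<close> show ?thesis
    by (simp add: field_simps)
qed

theorem theorem1p3:
  fixes u :: "'a::euclidean_space \<Rightarrow> real"
    and p s \<alpha>1 \<alpha>2 \<alpha> C :: real
  defines "d \<equiv> real DIM('a)"
  assumes hp: "p > 1"
    and hs: "0 < s" "s < 1"
    and h\<alpha>: "\<alpha> = \<alpha>1 + \<alpha>2"
    and h\<alpha>1: "-d < \<alpha>1 * p" "\<alpha>1 * p < s * p"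
    and h\<alpha>2: "-d < \<alpha>2 * p" "\<alpha>2 * p < s * p"
    and h\<alpha>p: "0 \<le> \<alpha> * p" "\<alpha> * p < s * p"
    and hd: "s * p - \<alpha> * p < d"
    and hC: "C > 0"
    and hSob: "\<forall>v :: 'a \<Rightarrow> real \<in> Wspa s p \<alpha>1 \<alpha>2.
                 Lp_pow (d * p / (d - s * p + \<alpha> * p)) v < \<infinity> \<and>
                 enn2real (Lp_pow (d * p / (d - s * p + \<alpha> * p)) v)
                     powr ((d - s * p + \<alpha> * p) / (d * p))
                   \<le> C powr (1 / p) * enn2real (gagliardo_pow s p \<alpha>1 \<alpha>2 v) powr (1 / p)"
    and hu: "u \<in> Wspa s p \<alpha>1 \<alpha>2"
    and hnorm: "Lp_pow p u = 1"
  shows "entropy_int p u \<le>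
           ereal (d / ((s - \<alpha>) * p^2) * ln (C * enn2real (gagliardo_pow s p \<alpha>1 \<alpha>2 u)))"
proof -
  define q where "q = d * p / (d - s * p + \<alpha> * p)"
  define G where "G = enn2real (gagliardo_pow s p \<alpha>1 \<alpha>2 u)"
  have "s - \<alpha> > 0" "p > 0"
    using h\<alpha>p hp by (auto simp: mult_less_cancel_right)
  moreover have "q = d * p / (d - (s - \<alpha>) * p)"
    by (simp add: q_def algebra_simps)
  ultimately have q: "p < q" "q / p / (q - p) = d / ((s - \<alpha>) * p\<^sup>2)"
    using critical_exponent_gap[of p "s - \<alpha>" d q] hd by (simp_all add: algebra_simps)
  have u[measurable]: "u \<in> borel_measurable lborel"
    using hu by (simp add: Wspa_def)
  have "Lp_pow q u < \<infinity>" and Sob: "enn2real (Lp_pow q u) powr (1 / q) \<le> (C * G) powr (1 / p)"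
    using hSob hu hC by (auto simp: q_def G_def powr_mult)
  then obtain A where A: "Lp_pow q u = ennreal A" "A \<ge> 0"
    by (cases "Lp_pow q u" rule: ennreal_cases) auto
  have "A \<noteq> 0"
    using A hnorm Lp_pow_eq_0_iff[OF u, of q] Lp_pow_eq_0_iff[OF u, of p] by auto
  with A have "A > 0" by simp
  have "ln A \<le> q / p * ln (C * G)"
    using Sob A \<open>A > 0\<close> \<open>p > 0\<close> q hC by (intro ln_le_of_powr_le) (auto simp: G_def)
  then have "ln A / (q - p) \<le> q / p * ln (C * G) / (q - p)"
    using q(1) by (intro divide_right_mono) auto
  also have "\<dots> = d / ((s - \<alpha>) * p\<^sup>2) * ln (C * G)"
    by (simp flip: q(2))
  finally have "ln A / (q - p) \<le> d / ((s - \<alpha>) * p\<^sup>2) * ln (C * G)" .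
  moreover have "entropy_int p u \<le> ereal (ln A / (q - p))"
    using entropy_int_le_ln_Lp_pow[OF u q(1) hnorm A(1) \<open>A > 0\<close>] .
  ultimately show ?thesis
    unfolding G_def by (meson ereal_less_eq(3) order_trans)
qed

end
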